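(* Let $A\in\mathbb{R}^{2\times2}$ be diagonalizable (over $\mathbb{C}$) and let $p\in\{1,\infty\}$. Then there exists an invertible $W\in\mathbb{R}^{2\times 2}$ such that the linear vector field $x\mapsto Ax$ is WIC with respect to the weighted norm $x\mapsto\|Wx\|_p$ (equivalently, $\mu_p(WAW^{-1})\le 0$) if and only if every eigenvalue of $A$ lies in the cone $\{\alpha+\beta i:\ \alpha\le 0,\ |\beta|\le-\alpha\}$.
   Context: For $x\in\mathbb{R}^2$, $\|x\|_1=|x_1|+|x_2|$ and $\|x\|_\infty=\max(|x_1|,|x_2|)$. The matrix measure of $B\in\mathbb{R}^{2\times2}$ is $\mu_p(B)=\lim_{h\to0^+}\frac{\|I+hB\|_p-1}{h}$ (induced matrix norm); explicitly $\mu_1(B)=\max_j\big(b_{jj}+\sum_{i\ne j}|b_{ij}|\big)$ and $\mu_\infty(B)=\max_i\big(b_{ii}+\sum_{j\ne i}|b_{ij}|\big)$. A vector field $f$ is weakly infinitesimally contracting (WIC) with respect to a norm if $\sup_x \mu(Df(x))\le 0$ for the matrix measure $\mu$ associated to that norm; for the weighted norm $\|Wx\|_p$ and $f(x)=Ax$ this means $\mu_p(WAW^{-1})\le 0$. *)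

theory Defs
  imports "HOL-Analysis.Analysis"
begin

datatype pnorm = P1 | PInf

text \<open>Matrix measure induced by the 1-norm: max over columns j of
  b_jj + sum over i different from j of abs b_ij.\<close>
definition mu1 :: "real^2^2 \<Rightarrow> real" where
  "mu1 B = Max ((\<lambda>j. B$j$j + (\<Sum>i\<in>UNIV - {j}. \<bar>B$i$j\<bar>)) ` UNIV)"

text \<open>Matrix measure induced by the infinity-norm: max over rows i of
  b_ii + sum over j different from i of abs b_ij.\<close>
definition muinf :: "real^2^2 \<Rightarrow> real" where
  "muinf B = Max ((\<lambda>i. B$i$i + (\<Sum>j\<in>UNIV - {i}. \<bar>B$i$j\<bar>)) ` UNIV)"

definition mu :: "pnorm \<Rightarrow> real^2^2 \<Rightarrow> real" where
  "mu p B = (case p of P1 \<Rightarrow> mu1 B | PInf \<Rightarrow> muinf B)"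

definition cmat :: "real^'n^'m \<Rightarrow> complex^'n^'m" where
  "cmat A = (\<chi> i j. complex_of_real (A$i$j))"

definition diagonalizable_C :: "real^'n^'n \<Rightarrow> bool" where
  "diagonalizable_C A \<longleftrightarrow> (\<exists>P :: complex^'n^'n. invertible P \<and>
      (\<forall>i j. i \<noteq> j \<longrightarrow> (matrix_inv P ** cmat A ** P)$i$j = 0))"

definition is_eigenvalue_C :: "real^'n^'n \<Rightarrow> complex \<Rightarrow> bool" where
  "is_eigenvalue_C A l \<longleftrightarrow> (\<exists>v :: complex^'n. v \<noteq> 0 \<and> cmat A *v v = l *s v)"

definition in_cone :: "complex \<Rightarrow> bool" where
  "in_cone z \<longleftrightarrow> Re z \<le> 0 \<and> \<bar>Im z\<bar> \<le> - Re z"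

end

theory Submission
  imports Defs
begin

(*
  If W A W^-1 = [[a, b], [c, d]] has nonpositive matrix measure, then a + |b| <= 0 and
  d + |c| <= 0, up to exchanging b and c.  So |b c| <= a d, and the roots of the characteristic
  polynomial x^2 - (a + d) x + (a d - b c) lie in the cone: real roots are nonpositive since
  all coefficients are nonnegative, and non-real roots have real part (a + d)/2 and squared
  imaginary part at most (a + d)^2/4.

  Conversely, A is brought into a real normal form by similarity.  Non-real eigenvalues
  alpha +- i beta give the block [[alpha, beta], [-beta, alpha]], of measure alpha + |beta|.
  Real eigenvalues r1, r2 <= 0 give a triangular matrix [[r1, s], [0, r2]], which can be
  diagonalised if r1 ~= r2 and rescaled to |s| = -r1 if r1 = r2 < 0.  Diagonalisability of A
  is needed only to exclude the nilpotent Jordan block r1 = r2 = 0, s ~= 0.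
*)

lemma matrix_vector_mult_mat: "(mat l :: 'a::semiring_1^'n^'n) *v v = l *s v"
  by (simp add: vec_eq_iff matrix_vector_mult_def mat_def if_distrib[of "\<lambda>x. x * _"] cong: if_cong)

lemma eigenvector_iff_det:
  fixes A :: "'a::field^'n^'n"
  shows "(\<exists>v. v \<noteq> 0 \<and> A *v v = l *s v) \<longleftrightarrow> det (A - mat l) = 0"
proof -
  have "A *v v = l *s v \<longleftrightarrow> (A - mat l) *v v = 0" for v
    by (simp add: matrix_vector_mult_diff_rdistrib matrix_vector_mult_mat)
  then show ?thesis
    by (metis invertible_det_nz invertible_left_inverse matrix_left_invertible_ker)
qed

lemma matrix_inv_eq:
  fixes A B :: "'a::field^'n^'n"
  assumes "A ** B = mat 1"
  shows "matrix_inv A = B"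
proof -
  have "B ** A = mat 1"
    using assms matrix_left_right_inverse by blast
  then have "matrix_inv A = matrix_inv A ** (A ** B)" and "matrix_inv A ** A = mat 1"
    using assms someI[of "\<lambda>A'. A ** A' = mat 1 \<and> A' ** A = mat 1" B]
    by (simp_all add: matrix_inv_def)
  then show ?thesis
    by (metis matrix_mul_assoc matrix_mul_lid)
qed

lemma matrix_inv_right:
  fixes A :: "'a::field^'n^'n"
  assumes "invertible A"
  shows "A ** matrix_inv A = mat 1"
  using assms matrix_inv_eq unfolding invertible_def by metis

lemma matrix_inv_left:
  fixes A :: "'a::field^'n^'n"
  assumes "invertible A"
  shows "matrix_inv A ** A = mat 1"
  using matrix_inv_right[OF assms] matrix_left_right_inverse by blast

lemma trace_det_similar:
  fixes A B M :: "'a::field^'n^'n"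
  assumes "A ** B = mat 1"
  shows "trace (A ** M ** B) = trace M" "det (A ** M ** B) = det M"
proof -
  have BA: "B ** A = mat 1"
    using assms matrix_left_right_inverse by blast
  have "trace (A ** M ** B) = trace (B ** (A ** M))"
    by (rule trace_mul_sym)
  also have "\<dots> = trace M"
    by (simp add: BA matrix_mul_assoc flip: matrix_mul_assoc[of B])
  finally show "trace (A ** M ** B) = trace M" .
  show "det (A ** M ** B) = det M"
    using arg_cong[OF BA, of det] by (simp add: det_mul mult.commute)
qed

lemma orthogonal_matrix_first_column_eigenvector:
  fixes A :: "real^'n^'n"
  assumes "v \<noteq> 0" "A *v v = r *s v"
  obtains Q where "orthogonal_matrix Q" "(transpose Q ** A ** Q) *v axis k 1 = r *s axis k 1"
proof -
  obtain Q where Q: "orthogonal_matrix Q" "Q *v axis k 1 = sgn v"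
    using orthogonal_matrix_exists_basis[of "sgn v"] assms(1) by (metis norm_sgn)
  have "A *v sgn v = r *s sgn v"
    using assms(2) by (simp add: sgn_div_norm matrix_vector_mult_scaleR scalar_mult_eq_scaleR)
  then have "(transpose Q ** A ** Q) *v axis k 1 = r *s ((transpose Q ** Q) *v axis k 1)"
    by (simp add: Q(2) vector_scalar_commute flip: matrix_vector_mul_assoc)
  also have "\<dots> = r *s axis k 1"
    using Q(1) by (simp add: orthogonal_matrix_def)
  finally show ?thesis
    using Q(1) that by blast
qed

lemma cmat_nth [simp]: "cmat A $ i $ j = complex_of_real (A $ i $ j)"
  by (simp add: cmat_def)

lemma cmat_mult: "cmat ((X::real^'n^'m) ** (Y::real^'k^'n)) = cmat X ** cmat Y"
  by (simp add: cmat_def matrix_matrix_mult_def vec_eq_iff)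

lemma cmat_eq_0_iff: "cmat (X::real^'n^'m) = 0 \<longleftrightarrow> X = 0"
  by (simp add: cmat_def vec_eq_iff)

lemma diagonalizable_C_square_zero:
  fixes A :: "real^'n^'n"
  assumes "diagonalizable_C A" "A ** A = 0"
  shows "A = 0"
proof -
  obtain P :: "complex^'n^'n" where P: "invertible P"
    and off: "\<And>i j. i \<noteq> j \<Longrightarrow> (matrix_inv P ** cmat A ** P)$i$j = 0"
    using assms(1) unfolding diagonalizable_C_def by blast
  define M where "M = matrix_inv P ** cmat A ** P"
  have off_M: "i \<noteq> j \<Longrightarrow> M$i$j = 0" for i j
    using off by (simp add: M_def)
  have P_inv: "P ** matrix_inv P = mat 1" "matrix_inv P ** P = mat 1"
    using matrix_inv_right[OF P] matrix_inv_left[OF P] by auto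
  have "M ** M = matrix_inv P ** cmat A ** (P ** matrix_inv P) ** cmat A ** P"
    unfolding M_def by (simp add: matrix_mul_assoc)
  also have "\<dots> = matrix_inv P ** cmat (A ** A) ** P"
    by (simp add: P_inv(1) cmat_mult matrix_mul_assoc)
  finally have MM: "M ** M = 0"
    using assms(2) cmat_eq_0_iff[of "0::real^'n^'n"] by simp
  have "(M ** M)$i$i = (\<Sum>k\<in>UNIV. if k = i then M$i$i * M$i$i else 0)" for i
    unfolding matrix_matrix_mult_def vec_lambda_beta by (rule sum.cong) (auto simp: off_M)
  then have diag_M: "M$i$i = 0" for i
    using MM by simp
  have "M$i$j = 0" for i j
    using off_M diag_M by (cases "i = j") auto
  then have "M = 0"
    by (simp add: vec_eq_iff)
  have "P ** M ** matrix_inv P = (P ** matrix_inv P) ** cmat A ** (P ** matrix_inv P)"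
    unfolding M_def by (simp add: matrix_mul_assoc)
  then have "cmat A = P ** M ** matrix_inv P"
    by (simp add: P_inv)
  then show ?thesis
    using \<open>M = 0\<close> by (simp add: cmat_eq_0_iff)
qed

lemma vec2_eq_iff: "(u::'a^2) = v \<longleftrightarrow> u$1 = v$1 \<and> u$2 = v$2"
  by (simp add: vec_eq_iff forall_2)

lemma mat2_eq_iff:
  "(X::'a^2^2) = Y \<longleftrightarrow> X$1$1 = Y$1$1 \<and> X$1$2 = Y$1$2 \<and> X$2$1 = Y$2$1 \<and> X$2$2 = Y$2$2"
  by (auto simp: vec2_eq_iff[of X Y] vec2_eq_iff[of "X$1"] vec2_eq_iff[of "X$2"])

definition mat2 :: "'a \<Rightarrow> 'a \<Rightarrow> 'a \<Rightarrow> 'a \<Rightarrow> 'a^2^2" where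
  "mat2 a b c d = (\<chi> i j. if i = 1 then (if j = 1 then a else b) else (if j = 1 then c else d))"

lemma mat2_nth [simp]:
  "mat2 a b c d $1$1 = a" "mat2 a b c d $1$2 = b" "mat2 a b c d $2$1 = c" "mat2 a b c d $2$2 = d"
  by (simp_all add: mat2_def)

lemma matrix_mult_2_nth: "((X::'a::semiring_1^2^2) ** Y)$i$j = X$i$1 * Y$1$j + X$i$2 * Y$2$j"
  by (simp add: matrix_matrix_mult_def sum_2)

lemma trace_2: "trace (A::'a::semiring_1^2^2) = A$1$1 + A$2$2"
  by (simp add: trace_def sum_2)

lemma det_minus_mat_2:
  "det ((A::'a::comm_ring_1^2^2) - mat l) = l^2 - trace A * l + det A"
  by (simp add: det_2 trace_2 mat_def power2_eq_square algebra_simps)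

lemma cayley_hamilton_2:
  "(A::'a::comm_ring_1^2^2) ** A = mat (trace A) ** A - mat (det A)"
  by (simp add: mat2_eq_iff matrix_mult_2_nth det_2 trace_2 mat_def algebra_simps)

lemma is_eigenvalue_C_iff:
  fixes A :: "real^2^2"
  shows "is_eigenvalue_C A l \<longleftrightarrow> l^2 - of_real (trace A) * l + of_real (det A) = 0"
  unfolding is_eigenvalue_C_def eigenvector_iff_det det_minus_mat_2
  by (simp add: trace_2 det_2)

lemma triangularize_real_eigenvalue_2:
  fixes A :: "real^2^2"
  assumes "r^2 - trace A * r + det A = 0"
  obtains P s where "invertible P" "A ** P = P ** mat2 r s 0 (trace A - r)"
proof -
  obtain v where "v \<noteq> 0" "A *v v = r *s v"
    using assms eigenvector_iff_det[of A r] det_minus_mat_2[of A r] by auto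
  then obtain Q where Q: "orthogonal_matrix Q"
    and col: "(transpose Q ** A ** Q) *v axis 1 1 = r *s axis 1 1"
    by (rule orthogonal_matrix_first_column_eigenvector)
  define J where "J = transpose Q ** A ** Q"
  have Q_orth: "transpose Q ** Q = mat 1" "Q ** transpose Q = mat 1"
    using Q by (simp_all add: orthogonal_matrix_def)
  have "J$1$1 = r" "J$2$1 = 0"
    using col by (simp_all add: J_def vec2_eq_iff matrix_vector_mult_def sum_2 axis_def)
  moreover have "trace J = trace A"
    unfolding J_def using Q_orth(1) by (rule trace_det_similar)
  ultimately have "J = mat2 r (J$1$2) 0 (trace A - r)"
    by (simp add: mat2_eq_iff trace_2)
  moreover have "A ** Q = Q ** J"
    by (simp add: J_def matrix_mul_assoc Q_orth(2))
  moreover have "invertible Q"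
    using Q_orth invertible_def by blast
  ultimately show ?thesis
    using that by metis
qed

lemma mu_2:
  "mu P1 B = max (B$1$1 + \<bar>B$2$1\<bar>) (B$2$2 + \<bar>B$1$2\<bar>)"
  "mu PInf B = max (B$1$1 + \<bar>B$1$2\<bar>) (B$2$2 + \<bar>B$2$1\<bar>)"
proof -
  have "{1, 2} - {1::2} = {2}" "{1, 2} - {2::2} = {1}"
    by auto
  then show "mu P1 B = max (B$1$1 + \<bar>B$2$1\<bar>) (B$2$2 + \<bar>B$1$2\<bar>)"
    "mu PInf B = max (B$1$1 + \<bar>B$1$2\<bar>) (B$2$2 + \<bar>B$2$1\<bar>)"
    by (simp_all add: mu_def mu1_def muinf_def UNIV_2)
qed

lemma mu_mat2_nonpos:
  assumes "a + \<bar>b\<bar> \<le> 0" "a + \<bar>c\<bar> \<le> 0" "d + \<bar>b\<bar> \<le> 0" "d + \<bar>c\<bar> \<le> 0"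
  shows "mu p (mat2 a b c d) \<le> 0"
  using assms by (cases p) (simp_all add: mu_2)

definition weighted_wic :: "pnorm \<Rightarrow> real^2^2 \<Rightarrow> bool" where
  "weighted_wic p A \<longleftrightarrow> (\<exists>W. invertible W \<and> mu p (W ** A ** matrix_inv W) \<le> 0)"

lemma weighted_wic_iff_inverse_pair:
  "weighted_wic p A \<longleftrightarrow> (\<exists>W V. W ** V = mat 1 \<and> mu p (W ** A ** V) \<le> 0)"
proof
  assume "weighted_wic p A"
  then show "\<exists>W V. W ** V = mat 1 \<and> mu p (W ** A ** V) \<le> 0"
    unfolding weighted_wic_def using matrix_inv_right by blast
next
  assume "\<exists>W V. W ** V = mat 1 \<and> mu p (W ** A ** V) \<le> 0"
  then obtain W V where "W ** V = mat 1" "mu p (W ** A ** V) \<le> 0"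
    by blast
  then show "weighted_wic p A"
    unfolding weighted_wic_def using invertible_right_inverse matrix_inv_eq by metis
qed

lemma weighted_wicI: "mu p A \<le> 0 \<Longrightarrow> weighted_wic p A"
  unfolding weighted_wic_iff_inverse_pair by (intro exI[of _ "mat 1"]) simp

lemma weighted_wic_similar:
  assumes "invertible P" "A ** P = P ** J" "weighted_wic p J"
  shows "weighted_wic p A"
proof -
  obtain W V where WV: "W ** V = mat 1" "mu p (W ** J ** V) \<le> 0"
    using assms(3) unfolding weighted_wic_iff_inverse_pair by blast
  define Q where "Q = matrix_inv P"
  have QP: "X ** Q ** P = X" for X :: "real^2^2"
    by (simp add: Q_def matrix_inv_left[OF assms(1)] flip: matrix_mul_assoc)
  have AP: "X ** A ** P = X ** P ** J" for X :: "real^2^2"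
    using assms(2) by (simp flip: matrix_mul_assoc)
  have "(W ** Q) ** (P ** V) = mat 1" "(W ** Q) ** A ** (P ** V) = W ** J ** V"
    using WV(1) by (simp_all add: matrix_mul_assoc QP AP)
  then show ?thesis
    unfolding weighted_wic_iff_inverse_pair using WV(2) by metis
qed

lemma char_root_in_cone:
  fixes a b c d :: real
  assumes "a + \<bar>b\<bar> \<le> 0" "d + \<bar>c\<bar> \<le> 0"
    and root: "l^2 - of_real (a + d) * l + of_real (a * d - b * c) = 0"
  shows "in_cone l"
proof -
  obtain x y where l: "l = Complex x y"
    by (cases l)
  have re: "x^2 - y^2 - (a + d) * x + (a * d - b * c) = 0"
    using arg_cong[OF root, of Re] by (simp add: l power2_eq_square)
  have im: "y * (2 * x - (a + d)) = 0"
    using arg_cong[OF root, of Im] by (simp add: l power2_eq_square algebra_simps)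
  have "\<bar>b\<bar> * \<bar>c\<bar> \<le> (- a) * (- d)"
    using assms(1,2) by (intro mult_mono) auto
  moreover have "\<bar>b * c\<bar> = \<bar>b\<bar> * \<bar>c\<bar>"
    by (rule abs_mult)
  ultimately have "\<bar>b * c\<bar> \<le> a * d"
    by simp
  then have bc: "b * c \<le> a * d" "- (b * c) \<le> a * d"
    by linarith+
  have "a \<le> 0" "d \<le> 0"
    using assms(1,2) by auto
  from im consider "y = 0" | "2 * x = a + d"
    by auto
  then show ?thesis
  proof cases
    case 1
    then have re0: "x^2 - (a + d) * x + (a * d - b * c) = 0"
      using re by simp
    have "x \<le> 0"
    proof (rule ccontr)
      assume "\<not> x \<le> 0"
      then have "x^2 > 0" "(a + d) * x \<le> 0"
        using \<open>a \<le> 0\<close> \<open>d \<le> 0\<close> by (auto intro: mult_nonpos_nonneg)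
      then show False
        using re0 bc by linarith
    qed
    then show ?thesis
      by (simp add: in_cone_def l 1)
  next
    case 2
    then have x: "x = (a + d) / 2"
      by simp
    have "y^2 - x^2 = (a * d - b * c) - (a + d) * x"
      using re by linarith
    also have "\<dots> = - (a^2 + d^2) / 2 - b * c"
      by (simp add: x power2_eq_square field_simps)
    also have "\<dots> \<le> - (a^2 + d^2) / 2 + a * d"
      using bc by simp
    also have "\<dots> = - ((a - d)^2 / 2)"
      by (simp add: power2_eq_square field_simps)
    also have "\<dots> \<le> 0"
      by simp
    finally have "\<bar>y\<bar> \<le> \<bar>x\<bar>"
      by (simp add: abs_le_square_iff)
    moreover have "x \<le> 0"
      using 2 \<open>a \<le> 0\<close> \<open>d \<le> 0\<close> by simp
    ultimately show ?thesis
      by (simp add: in_cone_def l)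
  qed
qed

lemma in_cone_if_weighted_wic:
  assumes "weighted_wic p A" "is_eigenvalue_C A l"
  shows "in_cone l"
proof -
  obtain W V where WV: "W ** V = mat 1" and mu: "mu p (W ** A ** V) \<le> 0"
    using assms(1) unfolding weighted_wic_iff_inverse_pair by blast
  define B where "B = W ** A ** V"
  have "l^2 - of_real (trace B) * l + of_real (det B) = 0"
    using assms(2) trace_det_similar[OF WV, of A] by (simp add: B_def is_eigenvalue_C_iff)
  then have root: "l^2 - of_real (B$1$1 + B$2$2) * l + of_real (B$1$1 * B$2$2 - B$1$2 * B$2$1) = 0"
    by (simp add: trace_2 det_2)
  show ?thesis
  proof (cases p)
    case P1
    with mu have "B$1$1 + \<bar>B$2$1\<bar> \<le> 0" "B$2$2 + \<bar>B$1$2\<bar> \<le> 0"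
      by (simp_all add: B_def mu_2)
    then show ?thesis
      using root by (intro char_root_in_cone[of _ "B$2$1" _ "B$1$2"]) (simp_all add: mult.commute)
  next
    case PInf
    with mu have "B$1$1 + \<bar>B$1$2\<bar> \<le> 0" "B$2$2 + \<bar>B$2$1\<bar> \<le> 0"
      by (simp_all add: B_def mu_2)
    then show ?thesis
      using root by (rule char_root_in_cone)
  qed
qed

lemma weighted_wic_upper_triangular:
  assumes "r1 \<le> 0" "r2 \<le> 0" "r1 = 0 \<Longrightarrow> r2 = 0 \<Longrightarrow> s = 0"
  shows "weighted_wic p (mat2 r1 s 0 r2)"
proof -
  consider "s = 0" | "r1 \<noteq> r2" | "r1 = r2" "r1 < 0" "s \<noteq> 0"
    using assms by force
  then show ?thesis
  proof cases
    case 1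
    then show ?thesis
      using assms by (intro weighted_wicI mu_mat2_nonpos) auto
  next
    case 2
    show ?thesis
    proof (rule weighted_wic_similar)
      show "invertible (mat2 1 s 0 (r2 - r1))"
        using 2 by (simp add: invertible_det_nz det_2)
      show "mat2 r1 s 0 r2 ** mat2 1 s 0 (r2 - r1) = mat2 1 s 0 (r2 - r1) ** mat2 r1 0 0 r2"
        by (simp add: mat2_eq_iff matrix_mult_2_nth algebra_simps)
      show "weighted_wic p (mat2 r1 0 0 r2)"
        using assms by (intro weighted_wicI mu_mat2_nonpos) auto
    qed
  next
    case 3
    define e where "e = - r1 / \<bar>s\<bar>"
    have "e > 0" "\<bar>s * e\<bar> = - r1"
      using 3 by (auto simp: e_def abs_mult divide_neg_pos)
    show ?thesis
    proof (rule weighted_wic_similar)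
      show "invertible (mat2 1 0 0 e)"
        using \<open>e > 0\<close> by (simp add: invertible_det_nz det_2)
      show "mat2 r1 s 0 r2 ** mat2 1 0 0 e = mat2 1 0 0 e ** mat2 r1 (s * e) 0 r1"
        using 3 by (simp add: mat2_eq_iff matrix_mult_2_nth algebra_simps)
      show "weighted_wic p (mat2 r1 (s * e) 0 r1)"
        using \<open>\<bar>s * e\<bar> = - r1\<close> 3 by (intro weighted_wicI mu_mat2_nonpos) auto
    qed
  qed
qed

lemma weighted_wic_nonreal_eigenvalues:
  fixes A :: "real^2^2"
  assumes "(trace A)^2 < 4 * det A" "\<forall>l. is_eigenvalue_C A l \<longrightarrow> in_cone l"
  shows "weighted_wic p A"
proof -
  define \<alpha> where "\<alpha> = trace A / 2"
  define \<beta> where "\<beta> = sqrt (4 * det A - (trace A)^2) / 2"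
  have "\<beta> > 0" "\<beta>^2 = det A - \<alpha>^2"
    using assms(1) by (simp_all add: \<alpha>_def \<beta>_def power_divide)
  then have "is_eigenvalue_C A (Complex \<alpha> \<beta>)"
    by (simp add: is_eigenvalue_C_iff complex_eq_iff power2_eq_square \<alpha>_def)
  then have "\<alpha> + \<beta> \<le> 0"
    using assms(2) \<open>\<beta> > 0\<close> by (auto simp: in_cone_def)
  have "A$2$1 \<noteq> 0"
  proof
    assume "A$2$1 = 0"
    then have "4 * det A - (trace A)^2 = - ((A$1$1 - A$2$2)^2)"
      by (simp add: det_2 trace_2 power2_eq_square algebra_simps)
    then show False
      using assms(1) zero_le_power2[of "A$1$1 - A$2$2"] by linarith
  qed
  \<comment> \<open>the columns of P are the real and imaginary parts of an eigenvector for \<alpha> + i\<beta>\<close>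
  define P where "P = mat2 \<beta> ((A$2$2 - A$1$1) / 2) 0 (- A$2$1)"
  show ?thesis
  proof (rule weighted_wic_similar)
    show "invertible P"
      using \<open>\<beta> > 0\<close> \<open>A$2$1 \<noteq> 0\<close> by (simp add: P_def invertible_det_nz det_2)
    show "A ** P = P ** mat2 \<alpha> \<beta> (- \<beta>) \<alpha>"
      using \<open>\<beta>^2 = det A - \<alpha>^2\<close>
      by (simp add: P_def mat2_eq_iff matrix_mult_2_nth \<alpha>_def det_2 trace_2 power2_eq_square field_simps)
    show "weighted_wic p (mat2 \<alpha> \<beta> (- \<beta>) \<alpha>)"
      using \<open>\<alpha> + \<beta> \<le> 0\<close> \<open>\<beta> > 0\<close> by (intro weighted_wicI mu_mat2_nonpos) auto
  qed
qed

lemma weighted_wic_real_eigenvalues: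
  fixes A :: "real^2^2"
  assumes "diagonalizable_C A" "4 * det A \<le> (trace A)^2"
    and cone: "\<forall>l. is_eigenvalue_C A l \<longrightarrow> in_cone l"
  shows "weighted_wic p A"
proof -
  define r1 where "r1 = (trace A + sqrt ((trace A)^2 - 4 * det A)) / 2"
  define r2 where "r2 = trace A - r1"
  have root: "r1^2 - trace A * r1 + det A = 0"
    using assms(2) by (simp add: r1_def power2_eq_square field_simps)
  then have "r2^2 - trace A * r2 + det A = 0" "det A = r1 * r2"
    by (simp_all add: r2_def power2_eq_square algebra_simps)
  have nonpos: "r \<le> 0" if "r^2 - trace A * r + det A = 0" for r
  proof -
    have "is_eigenvalue_C A (of_real r)"
      using arg_cong[OF that, of complex_of_real] by (simp add: is_eigenvalue_C_iff)
    then have "in_cone (of_real r)"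
      using cone by blast
    then show ?thesis
      by (simp add: in_cone_def)
  qed
  obtain P s where P: "invertible P" "A ** P = P ** mat2 r1 s 0 r2"
    using triangularize_real_eigenvalue_2[OF root] unfolding r2_def by blast
  have "s = 0" if "r1 = 0" "r2 = 0"
  proof -
    have "A ** A = 0"
      using that \<open>det A = r1 * r2\<close> by (simp add: cayley_hamilton_2 r2_def)
    with assms(1) have "A = 0"
      by (rule diagonalizable_C_square_zero)
    then have "mat2 r1 s 0 r2 = matrix_inv P ** (P ** mat2 r1 s 0 r2)"
      by (simp add: matrix_mul_assoc matrix_inv_left[OF P(1)])
    also have "\<dots> = 0"
      using \<open>A = 0\<close> P(2) by simp
    finally show ?thesis
      by (simp add: mat2_eq_iff)
  qed
  then have "weighted_wic p (mat2 r1 s 0 r2)"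
    using nonpos root \<open>r2^2 - trace A * r2 + det A = 0\<close> by (intro weighted_wic_upper_triangular) auto
  with P show ?thesis
    by (rule weighted_wic_similar)
qed

lemma weighted_wic_iff_eigenvalues_in_cone:
  fixes A :: "real^2^2"
  assumes "diagonalizable_C A"
  shows "weighted_wic p A \<longleftrightarrow> (\<forall>l. is_eigenvalue_C A l \<longrightarrow> in_cone l)"
  using in_cone_if_weighted_wic weighted_wic_nonreal_eigenvalues weighted_wic_real_eigenvalues[OF assms]
  by (meson not_le)

theorem mainTheorem3:
  fixes A :: "real^2^2" and p :: pnorm
  assumes "diagonalizable_C A"
  shows "(\<exists>W :: real^2^2. invertible W \<and> mu p (W ** A ** matrix_inv W) \<le> 0)
         \<longleftrightarrow> (\<forall>l. is_eigenvalue_C A l \<longrightarrow> in_cone l)"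
  using weighted_wic_iff_eigenvalues_in_cone[OF assms] unfolding weighted_wic_def .

end
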